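(* Let $g:(0,\infty)\to(0,\infty)$ be bounded, non-decreasing and such that $g(t)=t\,g(1/t)$ for all $t>0$, and let $M=\sup_{t>0}g(t)$. Then $g(t)\ge g(1)\min\{1,t\}$ for all $t>0$. Moreover, if $\mu_\sigma$ is a symmetric probability density on $\mathbb{R}$, then for every $a\in\mathbb{R}$ the quantity $Z(a)=\int_{\mathbb{R}}g(e^{wa})\mu_\sigma(w)dw$ satisfies $\frac{g(1)}{2}\le Z(a)\le M$.
   Context: In the paper $a=\partial_i\log\pi(x)$ and $Z(a)=Z_i(x)$ is the normalising constant of the $i$-th coordinate of the locally-balanced proposal. *)

theory Defs
  imports "HOL-Analysis.Analysis"
begin

end

theory Submission
  imports Defs
begin

text \<open>Monotonicity gives \<open>g t \<ge> g 1\<close> for \<open>t \<ge> 1\<close>, and for \<open>t < 1\<close> the balance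
  relation \<open>g t = t g(1/t)\<close> reduces to that case. \<open>Z(a) \<le> M\<close> holds because \<mu> is a
  probability density. For the lower bound, symmetry of \<mu> turns \<open>2 Z(a)\<close> into the integral
  of \<open>g(exp(wa)) + g(exp(-wa))\<close> against \<mu>; one of the two exponentials is at least \<open>1\<close>,
  so the integrand is at least \<open>g 1\<close>.\<close>

lemma balanced_ge_min:
  fixes g :: "real \<Rightarrow> real"
  assumes mono: "mono_on {0<..} g"
    and bal: "\<And>t. t > 0 \<Longrightarrow> g t = t * g (1 / t)"
    and t: "t > 0"
  shows "g 1 * min 1 t \<le> g t"
proof (cases "t \<ge> 1")
  case True
  then show ?thesis
    using mono by (auto simp: mono_on_def)
next
  case False
  then have "g 1 \<le> g (1 / t)"
    using mono t by (auto simp: mono_on_def)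
  then have "t * g 1 \<le> t * g (1 / t)"
    using t by simp
  then show ?thesis
    using False bal[OF t] by (simp add: mult.commute)
qed

lemma mono_on_le_exp_add_exp_uminus:
  fixes g :: "real \<Rightarrow> real"
  assumes mono: "mono_on {0<..} g"
    and nonneg: "\<And>t. t > 0 \<Longrightarrow> g t \<ge> 0"
  shows "g 1 \<le> g (exp x) + g (exp (- x))"
proof (cases "x \<ge> 0")
  case True
  then have "g 1 \<le> g (exp x)"
    using mono by (auto simp: mono_on_def)
  then show ?thesis
    using nonneg[of "exp (- x)"] by simp
next
  case False
  then have "g 1 \<le> g (exp (- x))"
    using mono by (auto simp: mono_on_def)
  then show ?thesis
    using nonneg[of "exp x"] by simp
qed

lemma borel_measurable_mono_on_exp:
  fixes g :: "real \<Rightarrow> real"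
  assumes "mono_on {0<..} g"
  shows "(\<lambda>x. g (exp x)) \<in> borel_measurable borel"
proof (rule borel_measurable_mono)
  show "mono (\<lambda>x. g (exp x))"
    using assms by (auto simp: mono_def mono_on_def)
qed

lemma integrable_bounded_mult:
  fixes f \<mu> :: "'a \<Rightarrow> real"
  assumes \<mu>: "integrable M \<mu>"
    and f: "f \<in> borel_measurable M"
    and bound: "\<And>x. \<bar>f x\<bar> \<le> B"
  shows "integrable M (\<lambda>x. f x * \<mu> x)"
proof (rule Bochner_Integration.integrable_bound[where f = "\<lambda>x. B * \<mu> x"])
  show "integrable M (\<lambda>x. B * \<mu> x)"
    using \<mu> by simp
  show "(\<lambda>x. f x * \<mu> x) \<in> borel_measurable M"
    using f \<mu> by simp
  show "AE x in M. norm (f x * \<mu> x) \<le> norm (B * \<mu> x)"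
  proof (rule AE_I2)
    show "norm (f x * \<mu> x) \<le> norm (B * \<mu> x)" for x
      using bound[of x] by (simp add: abs_mult mult_right_mono)
  qed
qed

lemma integral_density_le_bound:
  fixes f \<mu> :: "'a \<Rightarrow> real"
  assumes f\<mu>: "integrable M (\<lambda>x. f x * \<mu> x)"
    and \<mu>: "integrable M \<mu>" "\<And>x. \<mu> x \<ge> 0" "(\<integral>x. \<mu> x \<partial>M) = 1"
    and bound: "\<And>x. f x \<le> B"
  shows "(\<integral>x. f x * \<mu> x \<partial>M) \<le> B"
proof -
  have "(\<integral>x. f x * \<mu> x \<partial>M) \<le> (\<integral>x. B * \<mu> x \<partial>M)"
    using f\<mu> \<mu> bound by (intro integral_mono) (auto intro: mult_right_mono)
  also have "\<dots> = B"
    using \<mu>(3) by simp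
  finally show ?thesis .
qed

lemma integral_symmetric_reflect:
  fixes f \<mu> :: "real \<Rightarrow> real"
  assumes sym: "\<And>w. \<mu> (- w) = \<mu> w"
  shows "(\<integral>w. f (- w) * \<mu> w \<partial>lborel) = (\<integral>w. f w * \<mu> w \<partial>lborel)"
  using lborel_integral_real_affine[of "-1" "\<lambda>w. f w * \<mu> w" 0] sym by simp

lemma integral_symmetric_density_ge:
  fixes f \<mu> :: "real \<Rightarrow> real"
  assumes f\<mu>: "integrable lborel (\<lambda>w. f w * \<mu> w)"
    and \<mu>: "integrable lborel \<mu>" "\<And>w. \<mu> w \<ge> 0" "(\<integral>w. \<mu> w \<partial>lborel) = 1"
    and sym: "\<And>w. \<mu> (- w) = \<mu> w"
    and lower: "\<And>w. c \<le> f w + f (- w)"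
  shows "c / 2 \<le> (\<integral>w. f w * \<mu> w \<partial>lborel)"
proof -
  have f\<mu>_reflect: "integrable lborel (\<lambda>w. f (- w) * \<mu> w)"
    using lborel_integrable_real_affine[OF f\<mu>, of "-1" 0] sym by simp
  have "c = (\<integral>w. c * \<mu> w \<partial>lborel)"
    using \<mu>(3) by simp
  also have "\<dots> \<le> (\<integral>w. f w * \<mu> w + f (- w) * \<mu> w \<partial>lborel)"
  proof (rule integral_mono)
    show "c * \<mu> w \<le> f w * \<mu> w + f (- w) * \<mu> w" for w
      using lower[of w] \<mu>(2)[of w] by (metis distrib_right mult_right_mono)
  qed (use \<mu> f\<mu> f\<mu>_reflect in auto)
  also have "\<dots> = 2 * (\<integral>w. f w * \<mu> w \<partial>lborel)"
    using f\<mu> f\<mu>_reflect sym by (simp add: integral_symmetric_reflect)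
  finally show ?thesis
    by simp
qed

theorem lemma8:
  fixes g :: "real \<Rightarrow> real"
  assumes pos: "\<And>t. t > 0 \<Longrightarrow> g t > 0"
    and bdd: "bdd_above (g ` {0<..})"
    and mono: "mono_on {0<..} g"
    and bal: "\<And>t. t > 0 \<Longrightarrow> g t = t * g (1 / t)"
  shows "(\<forall>t>0. g t \<ge> g 1 * min 1 t) \<and>
    (\<forall>\<mu> :: real \<Rightarrow> real.
       (\<mu> \<in> borel_measurable lborel \<and> (\<forall>w. \<mu> w \<ge> 0) \<and> integrable lborel \<mu> \<and>
        (\<integral>w. \<mu> w \<partial>lborel) = 1 \<and> (\<forall>w. \<mu> (- w) = \<mu> w)) \<longrightarrow>
       (\<forall>a::real.
          g 1 / 2 \<le> (\<integral>w. g (exp (w * a)) * \<mu> w \<partial>lborel) \<and>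
          (\<integral>w. g (exp (w * a)) * \<mu> w \<partial>lborel) \<le> Sup (g ` {0<..})))"
proof (intro conjI allI impI)
  show "g 1 * min 1 t \<le> g t" if "t > 0" for t
    using balanced_ge_min[OF mono bal that] .
  fix \<mu> :: "real \<Rightarrow> real" and a :: real
  assume "\<mu> \<in> borel_measurable lborel \<and> (\<forall>w. \<mu> w \<ge> 0) \<and> integrable lborel \<mu> \<and>
        (\<integral>w. \<mu> w \<partial>lborel) = 1 \<and> (\<forall>w. \<mu> (- w) = \<mu> w)"
  then have \<mu>: "integrable lborel \<mu>" "\<And>w. \<mu> w \<ge> 0" "(\<integral>w. \<mu> w \<partial>lborel) = 1"
    and sym: "\<And>w. \<mu> (- w) = \<mu> w"
    by auto
  have le_Sup: "g (exp x) \<le> Sup (g ` {0<..})" for x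
    using bdd by (intro cSup_upper) auto
  have "(\<lambda>w. g (exp (w * a))) \<in> borel_measurable lborel"
    using measurable_compose[OF _ borel_measurable_mono_on_exp[OF mono], of "\<lambda>w. w * a"] by simp
  then have integrable: "integrable lborel (\<lambda>w. g (exp (w * a)) * \<mu> w)"
    using \<mu>(1) le_Sup pos[of "exp _"]
    by (intro integrable_bounded_mult[where B = "Sup (g ` {0<..})"]) (auto simp: abs_of_pos)
  show "(\<integral>w. g (exp (w * a)) * \<mu> w \<partial>lborel) \<le> Sup (g ` {0<..})"
    using integral_density_le_bound[OF integrable \<mu>] le_Sup .
  show "g 1 / 2 \<le> (\<integral>w. g (exp (w * a)) * \<mu> w \<partial>lborel)"
    using integral_symmetric_density_ge[OF integrable \<mu> sym]
      mono_on_le_exp_add_exp_uminus[OF mono less_imp_le[OF pos]]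
    by simp
qed

end
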